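(* Let $G=(V,E)$ be a graph with $n=|V|$. For all $i\in[0,n-1]$, all $v\in V$ and all $w\in D_{i,v}\setminus D_{i+1,v}$, we have $p_v([w]_v)=i$.
   Context: Graphs are finite, simple, undirected, with nonempty vertex set. A module of $G=(V,E)$ is a nonempty $M\subseteq V$ such that every $u\in V\setminus M$ is adjacent either to all or to none of the vertices of $M$. For $|V|>1$ and $v\in V$, $D_G(v)$ is: the connected component of $G$ containing $v$ if $G$ is disconnected; otherwise the connected component of $\overline{G}$ containing $v$ if $\overline{G}$ is disconnected; otherwise (both connected, in which case the maximal proper modules of $G$ partition $V$) the maximal proper module of $G$ containing $v$; if $|V|=1$, $D_G(v)=\{v\}$. Define $D_{0,v}=V$ and $D_{i+1,v}=D_{G[D_{i,v}]}(v)$ for $i\in[0,n-1]$. For $v,w\in V$, $M_{v,w}$ is the intersection of all modules of $G$ containing $v$ and $w$. Define $w_1\prec_v w_2$ iff $M_{v,w_2}\subsetneq M_{v,w_1}$; $\prec_v$ is a strict weak order, so incomparability $\sim_v$ w.r.t. $\prec_v$ is an equivalence relation on $V$ with classes $[w]_v$, and $\prec_v$ induces a strict linear order on $V/{\sim_v}$ (with $[z]_v\prec_v[w]_v$ iff $z\prec_v w$). $p_v\colon V/{\sim_v}\to\mathbb{N}$ assigns to each class its position in this strict linear order, the smallest class receiving $0$. *)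

theory Defs
  imports Main
begin

text \<open>A graph is given by a finite nonempty vertex set V and a symmetric, irreflexive
  adjacency relation E (only its restriction to V matters).  Induced subgraphs G[S]
  are represented by the pair (S, E).\<close>

definition is_module :: "'a set \<Rightarrow> ('a \<Rightarrow> 'a \<Rightarrow> bool) \<Rightarrow> 'a set \<Rightarrow> bool" where
  "is_module V E M \<longleftrightarrow> M \<noteq> {} \<and> M \<subseteq> V \<and>
     (\<forall>u\<in>V - M. (\<forall>m\<in>M. E u m) \<or> (\<forall>m\<in>M. \<not> E u m))"

definition compl_rel :: "('a \<Rightarrow> 'a \<Rightarrow> bool) \<Rightarrow> 'a \<Rightarrow> 'a \<Rightarrow> bool" where
  "compl_rel E x y \<longleftrightarrow> x \<noteq> y \<and> \<not> E x y"

definition reach :: "'a set \<Rightarrow> ('a \<Rightarrow> 'a \<Rightarrow> bool) \<Rightarrow> 'a \<Rightarrow> 'a \<Rightarrow> bool" where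
  "reach V E = (\<lambda>x y. x \<in> V \<and> y \<in> V \<and> E x y)\<^sup>*\<^sup>*"

definition component :: "'a set \<Rightarrow> ('a \<Rightarrow> 'a \<Rightarrow> bool) \<Rightarrow> 'a \<Rightarrow> 'a set" where
  "component V E v = {w \<in> V. reach V E v w}"

definition connected_graph :: "'a set \<Rightarrow> ('a \<Rightarrow> 'a \<Rightarrow> bool) \<Rightarrow> bool" where
  "connected_graph V E \<longleftrightarrow> (\<forall>x\<in>V. \<forall>y\<in>V. reach V E x y)"

definition max_proper_module :: "'a set \<Rightarrow> ('a \<Rightarrow> 'a \<Rightarrow> bool) \<Rightarrow> 'a set \<Rightarrow> bool" where
  "max_proper_module V E M \<longleftrightarrow> is_module V E M \<and> M \<noteq> V \<and>
     (\<forall>M'. is_module V E M' \<and> M' \<noteq> V \<and> M \<subseteq> M' \<longrightarrow> M' = M)"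

definition Dfun :: "'a set \<Rightarrow> ('a \<Rightarrow> 'a \<Rightarrow> bool) \<Rightarrow> 'a \<Rightarrow> 'a set" where
  "Dfun V E v =
    (if card V = 1 then {v}
     else if \<not> connected_graph V E then component V E v
     else if \<not> connected_graph V (compl_rel E) then component V (compl_rel E) v
     else (THE M. max_proper_module V E M \<and> v \<in> M))"

fun Dseq :: "'a set \<Rightarrow> ('a \<Rightarrow> 'a \<Rightarrow> bool) \<Rightarrow> 'a \<Rightarrow> nat \<Rightarrow> 'a set" where
  "Dseq V E v 0 = V"
| "Dseq V E v (Suc i) = Dfun (Dseq V E v i) E v"

definition Mvw :: "'a set \<Rightarrow> ('a \<Rightarrow> 'a \<Rightarrow> bool) \<Rightarrow> 'a \<Rightarrow> 'a \<Rightarrow> 'a set" where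
  "Mvw V E v w = \<Inter> {M. is_module V E M \<and> v \<in> M \<and> w \<in> M}"

definition precv :: "'a set \<Rightarrow> ('a \<Rightarrow> 'a \<Rightarrow> bool) \<Rightarrow> 'a \<Rightarrow> 'a \<Rightarrow> 'a \<Rightarrow> bool" where
  "precv V E v w1 w2 \<longleftrightarrow> Mvw V E v w2 \<subset> Mvw V E v w1"

definition simv :: "'a set \<Rightarrow> ('a \<Rightarrow> 'a \<Rightarrow> bool) \<Rightarrow> 'a \<Rightarrow> 'a \<Rightarrow> 'a \<Rightarrow> bool" where
  "simv V E v w1 w2 \<longleftrightarrow> \<not> precv V E v w1 w2 \<and> \<not> precv V E v w2 w1"

definition classv :: "'a set \<Rightarrow> ('a \<Rightarrow> 'a \<Rightarrow> bool) \<Rightarrow> 'a \<Rightarrow> 'a \<Rightarrow> 'a set" where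
  "classv V E v w = {u \<in> V. simv V E v u w}"

definition classesv :: "'a set \<Rightarrow> ('a \<Rightarrow> 'a \<Rightarrow> bool) \<Rightarrow> 'a \<Rightarrow> 'a set set" where
  "classesv V E v = classv V E v ` V"

definition class_precv :: "'a set \<Rightarrow> ('a \<Rightarrow> 'a \<Rightarrow> bool) \<Rightarrow> 'a \<Rightarrow> 'a set \<Rightarrow> 'a set \<Rightarrow> bool" where
  "class_precv V E v C1 C2 \<longleftrightarrow> (\<exists>z\<in>C1. \<exists>w\<in>C2. precv V E v z w)"

definition pv :: "'a set \<Rightarrow> ('a \<Rightarrow> 'a \<Rightarrow> bool) \<Rightarrow> 'a \<Rightarrow> 'a set \<Rightarrow> nat" where
  "pv V E v C = card {C' \<in> classesv V E v. class_precv V E v C' C}"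

end

theory Submission
  imports Defs
begin

text \<open>Each \<open>D(i+1)\<close> is a module of \<open>G[D(i)]\<close> containing v, so every \<open>D(i)\<close> is a module of G,
  and for w in the layer \<open>D(i) - D(i+1)\<close> the module \<open>M(v,w)\<close> lies between \<open>D(i+1)\<close> and
  \<open>D(i)\<close>. Within one layer, \<open>w' \<in> M(v,w)\<close> holds iff \<open>w \<in> M(v,w')\<close>: if \<open>G[D(i)]\<close> or its
  complement is disconnected, \<open>M(v,w)\<close> is the union of the components of v and w, and
  otherwise it is all of \<open>D(i)\<close>. Consequently \<open>w1 \<prec>\<^sub>v w2\<close> holds exactly when the layer of w1
  comes before the layer of w2, the classes of \<open>\<sim>\<^sub>v\<close> are the layers together with {v}, and
  below the class of a vertex in layer i lie exactly the nonempty layers \<open>0, ..., i - 1\<close>.\<close>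

lemma symp_on_compl_rel: "symp_on S E \<Longrightarrow> symp_on S (compl_rel E)"
  unfolding symp_on_def compl_rel_def by blast

lemma is_module_compl_rel_iff [simp]: "is_module S (compl_rel E) X \<longleftrightarrow> is_module S E X"
proof -
  have "((\<forall>m\<in>X. compl_rel E u m) \<or> (\<forall>m\<in>X. \<not> compl_rel E u m))
      \<longleftrightarrow> ((\<forall>m\<in>X. E u m) \<or> (\<forall>m\<in>X. \<not> E u m))" if "u \<notin> X" for u
    using that unfolding compl_rel_def by fastforce
  then show ?thesis unfolding is_module_def by simp
qed

lemma is_module_singleton: "v \<in> S \<Longrightarrow> is_module S E {v}"
  unfolding is_module_def by auto

lemma is_module_self: "S \<noteq> {} \<Longrightarrow> is_module S E S"
  unfolding is_module_def by auto

lemma is_module_trans: "is_module V E S \<Longrightarrow> is_module S E X \<Longrightarrow> is_module V E X"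
  unfolding is_module_def by blast

lemma is_module_Int: "is_module V E X \<Longrightarrow> S \<subseteq> V \<Longrightarrow> X \<inter> S \<noteq> {} \<Longrightarrow> is_module S E (X \<inter> S)"
  unfolding is_module_def by blast

lemma is_module_Un:
  assumes m1: "is_module S E M1" and m2: "is_module S E M2" and c: "c \<in> M1" "c \<in> M2"
  shows "is_module S E (M1 \<union> M2)"
  unfolding is_module_def
proof (intro conjI ballI)
  fix u assume u: "u \<in> S - (M1 \<union> M2)"
  have "(\<forall>m\<in>M1. E u m) \<or> (\<forall>m\<in>M1. \<not> E u m)" "(\<forall>m\<in>M2. E u m) \<or> (\<forall>m\<in>M2. \<not> E u m)"
    using m1 m2 u unfolding is_module_def by blast+
  then show "(\<forall>m\<in>M1 \<union> M2. E u m) \<or> (\<forall>m\<in>M1 \<union> M2. \<not> E u m)"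
    using c by (cases "E u c") blast+
qed (use m1 m2 in \<open>auto simp: is_module_def\<close>)

lemma is_module_if_closed:
  assumes "symp_on S R" "X \<subseteq> S" "X \<noteq> {}" "\<And>a b. a \<in> X \<Longrightarrow> b \<in> S \<Longrightarrow> R a b \<Longrightarrow> b \<in> X"
  shows "is_module S R X"
  using assms unfolding is_module_def symp_on_def by blast

lemma reach_sym:
  assumes "symp_on S R" "reach S R x y"
  shows "reach S R y x"
proof -
  have "symp (\<lambda>x y. x \<in> S \<and> y \<in> S \<and> R x y)"
    using assms(1) unfolding symp_on_def symp_def by blast
  then show ?thesis using assms(2) unfolding reach_def by (blast dest: sympD[OF symp_rtranclp])
qed

lemma component_subset: "component S R v \<subseteq> S"
  unfolding component_def by blast

lemma self_in_component: "v \<in> S \<Longrightarrow> v \<in> component S R v"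
  unfolding component_def reach_def by simp

lemma component_closed: "a \<in> component S R v \<Longrightarrow> b \<in> S \<Longrightarrow> R a b \<Longrightarrow> b \<in> component S R v"
  unfolding component_def reach_def by (auto intro: rtranclp.rtrancl_into_rtrancl)

lemma in_component_commute:
  "symp_on S R \<Longrightarrow> w \<in> S \<Longrightarrow> u \<in> component S R w \<Longrightarrow> w \<in> component S R u"
  unfolding component_def using reach_sym by fastforce

lemma component_neq_if_not_connected:
  assumes "symp_on S R" "v \<in> S" "\<not> connected_graph S R"
  shows "component S R v \<noteq> S"
proof
  assume "component S R v = S"
  then have "reach S R x v" "reach S R v y" if "x \<in> S" "y \<in> S" for x y
    using that reach_sym[OF assms(1)] unfolding component_def by blast+
  then have "connected_graph S R"
    unfolding connected_graph_def reach_def by (meson rtranclp_trans)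
  then show False using assms(3) by blast
qed

lemma is_module_component_Un:
  assumes "symp_on S R" "v \<in> S"
  shows "is_module S R (component S R v \<union> component S R w)"
proof (rule is_module_if_closed)
  show "component S R v \<union> component S R w \<noteq> {}"
    using self_in_component[OF assms(2)] by blast
qed (use assms(1) in \<open>auto simp: component_subset intro: component_closed\<close>)

text \<open>A module containing v and a vertex outside the component of v cannot be left by
  any edge of that component, for such an edge would join the component to that vertex.\<close>
lemma component_subset_module:
  assumes sym: "symp_on S R" and X: "is_module S R X" "v \<in> X" "w \<in> X"
    and w: "w \<notin> component S R v"
  shows "component S R v \<subseteq> X"
proof
  fix y assume "y \<in> component S R v"
  then have "reach S R v y" by (simp add: component_def)
  then show "y \<in> X" unfolding reach_def
  proof (induction rule: rtranclp_induct)
    case base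
    show ?case using X(2) .
  next
    case (step y z)
    then have yz: "y \<in> S" "z \<in> S" "R y z" by simp_all
    then have zy: "R z y" using sym by (simp add: symp_onD)
    have "y \<in> component S R v"
      using step(1) yz(1) unfolding component_def reach_def by simp
    then have z: "z \<in> component S R v" using yz(2,3) by (rule component_closed)
    show ?case
    proof (rule ccontr)
      assume "z \<notin> X"
      then have "(\<forall>m\<in>X. R z m) \<or> (\<forall>m\<in>X. \<not> R z m)"
        using X(1) yz(2) unfolding is_module_def by blast
      then have "R z w" using zy step.IH X(3) by blast
      with z have "w \<in> component S R v"
        using X(1,3) unfolding is_module_def by (blast intro: component_closed)
      with w show False by blast
    qed
  qed
qed

lemma Mvw_least: "is_module V E Y \<Longrightarrow> v \<in> Y \<Longrightarrow> w \<in> Y \<Longrightarrow> Mvw V E v w \<subseteq> Y"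
  unfolding Mvw_def by blast

lemma in_Mvw: "w \<in> Mvw V E v w"
  unfolding Mvw_def by blast

lemma Mvw_eqI:
  assumes "is_module V E M" "v \<in> M" "w \<in> M"
    and "\<And>X. is_module V E X \<Longrightarrow> v \<in> X \<Longrightarrow> w \<in> X \<Longrightarrow> M \<subseteq> X"
  shows "Mvw V E v w = M"
  using assms unfolding Mvw_def by blast

lemma Mvw_mono: "z \<in> Mvw V E v w \<Longrightarrow> Mvw V E v z \<subseteq> Mvw V E v w"
  unfolding Mvw_def by blast

lemma Mvw_self: "v \<in> V \<Longrightarrow> Mvw V E v v = {v}"
  by (rule Mvw_eqI) (auto intro: is_module_singleton)

lemma Mvw_restrict:
  assumes S: "is_module V E S" and "v \<in> S" "w \<in> S"
  shows "Mvw V E v w = Mvw S E v w"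
proof
  show "Mvw V E v w \<subseteq> Mvw S E v w"
    unfolding Mvw_def using is_module_trans[OF S] by blast
  have "Mvw S E v w \<subseteq> X" if "is_module V E X" "v \<in> X" "w \<in> X" for X
    using Mvw_least[OF is_module_Int[OF that(1)]] assms that unfolding is_module_def by blast
  then show "Mvw S E v w \<subseteq> Mvw V E v w"
    unfolding Mvw_def[of V] by blast
qed

text \<open>The vertices of M1 - M2 see nothing of M2 (b misses a, hence all of M1, so every
  vertex of M1 - M2 misses b, hence all of M2); thus no path leads from a to c.\<close>
lemma overlapping_module_cover_not_connected:
  assumes sym: "symp_on S R" and M: "is_module S R M1" "is_module S R M2" "M1 \<union> M2 = S"
    and c: "c \<in> M1" "c \<in> M2" and a: "a \<in> M1" "a \<notin> M2" and b: "b \<in> M2" "b \<notin> M1"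
    and ab: "\<not> R a b"
  shows "\<not> connected_graph S R"
proof
  assume conn: "connected_graph S R"
  have S: "M1 \<subseteq> S" "M2 \<subseteq> S" using M unfolding is_module_def by auto
  have "\<not> R b a" using symp_onD[OF sym, of b a] ab a(1) b(1) S by blast
  moreover have "(\<forall>m\<in>M1. R b m) \<or> (\<forall>m\<in>M1. \<not> R b m)"
    using M(1) b S unfolding is_module_def by blast
  ultimately have b_M1: "\<not> R b a'" if "a' \<in> M1" for a'
    using a(1) that by blast
  have "\<not> R a' m" if a': "a' \<in> M1 - M2" and m: "m \<in> M2" for a' m
  proof -
    have "\<not> R a' b" using symp_onD[OF sym, of a' b] b_M1 a' b(1) S by blast
    moreover have "(\<forall>m\<in>M2. R a' m) \<or> (\<forall>m\<in>M2. \<not> R a' m)"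
      using M(2) a' S unfolding is_module_def by blast
    ultimately show ?thesis using b(1) m by blast
  qed
  then have closed: "y \<in> M1 - M2" if "x \<in> M1 - M2" "y \<in> S" "R x y" for x y
    using that M(3) by blast
  have "reach S R a c" using conn a(1) c(1) S unfolding connected_graph_def by blast
  then have "c \<in> M1 - M2" unfolding reach_def
  proof (induction rule: rtranclp_induct)
    case base
    show ?case using a by blast
  next
    case (step y z)
    then show ?case using closed by blast
  qed
  then show False using c by blast
qed

lemma max_proper_moduleD:
  assumes "max_proper_module S E M"
  shows "is_module S E M" "M \<noteq> S"
    and "\<And>M'. is_module S E M' \<Longrightarrow> M' \<noteq> S \<Longrightarrow> M \<subseteq> M' \<Longrightarrow> M' = M"
  using assms unfolding max_proper_module_def by blast+

lemma max_proper_module_absorbs: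
  assumes sym: "symp_on S E"
    and conn: "connected_graph S E" "connected_graph S (compl_rel E)"
    and M: "max_proper_module S E M" "v \<in> M"
    and X: "is_module S E X" "v \<in> X" "\<not> X \<subseteq> M"
  shows "X = S"
proof (rule ccontr)
  assume "X \<noteq> S"
  note M_mod = max_proper_moduleD(1)[OF M(1)] and M_max = max_proper_moduleD(3)[OF M(1)]
  have "\<not> M \<subseteq> X" using M_max[OF X(1) \<open>X \<noteq> S\<close>] X(3) by blast
  then obtain a where a: "a \<in> M" "a \<notin> X" by blast
  obtain b where b: "b \<in> X" "b \<notin> M" using X(3) by blast
  have "is_module S E (M \<union> X)" using M_mod X(1) M(2) X(2) by (rule is_module_Un)
  then have cover: "M \<union> X = S" using M_max[of "M \<union> X"] X(3) by blast
  show False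
  proof (cases "E a b")
    case True
    then have "\<not> compl_rel E a b" by (simp add: compl_rel_def)
    with M_mod X(1) show False
      using overlapping_module_cover_not_connected[OF symp_on_compl_rel[OF sym], of M X]
        cover M(2) X(2) a b conn(2) by simp
  next
    case False
    with M_mod X(1) show False
      using overlapping_module_cover_not_connected[OF sym, of M X] cover M(2) X(2) a b conn(1)
      by simp
  qed
qed

lemma ex1_max_proper_module:
  assumes fin: "finite S" and v: "v \<in> S" and "card S \<noteq> 1" and sym: "symp_on S E"
    and conn: "connected_graph S E" "connected_graph S (compl_rel E)"
  shows "\<exists>!M. max_proper_module S E M \<and> v \<in> M"
proof -
  let ?F = "{M. is_module S E M \<and> M \<noteq> S \<and> v \<in> M}"
  have "?F \<subseteq> Pow S" unfolding is_module_def by blast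
  then have "finite ?F" using fin by (meson finite_Pow_iff finite_subset)
  moreover have "{v} \<in> ?F" using v assms(3) is_module_singleton by fastforce
  ultimately obtain M where "M \<in> ?F" and M_max: "\<forall>M'\<in>?F. M \<subseteq> M' \<longrightarrow> M = M'"
    using finite_has_maximal[of ?F] by blast
  then have M: "max_proper_module S E M" "v \<in> M"
    unfolding max_proper_module_def by blast+
  have "M' = M" if M': "max_proper_module S E M'" "v \<in> M'" for M'
  proof (cases "M' \<subseteq> M")
    case True
    then show ?thesis using max_proper_moduleD(3)[OF M'(1)] max_proper_moduleD(1,2)[OF M(1)]
      by blast
  next
    case False
    then have "M' = S"
      using max_proper_module_absorbs[OF sym conn M] max_proper_moduleD(1)[OF M'(1)] M'(2)
      by blast
    then show ?thesis using max_proper_moduleD(2)[OF M'(1)] by blast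
  qed
  then show ?thesis using M by blast
qed

text \<open>T plays the role of \<open>D(i+1)\<close> inside \<open>S = D(i)\<close>; these are the only properties
  of Dfun used later.\<close>
definition layer_module :: "'a set \<Rightarrow> ('a \<Rightarrow> 'a \<Rightarrow> bool) \<Rightarrow> 'a \<Rightarrow> 'a set \<Rightarrow> bool" where
  "layer_module S E v T \<longleftrightarrow> v \<in> T \<and> is_module S E T \<and>
     (\<forall>w\<in>S - T. T \<subseteq> Mvw S E v w) \<and>
     (\<forall>w\<in>S - T. \<forall>w'\<in>S - T. w' \<in> Mvw S E v w \<longleftrightarrow> w \<in> Mvw S E v w')"

lemma Mvw_components:
  assumes sym: "symp_on S R" and modules: "\<And>X. is_module S E X \<longleftrightarrow> is_module S R X"
    and v: "v \<in> S" and w: "w \<in> S" "w \<notin> component S R v"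
  shows "Mvw S E v w = component S R v \<union> component S R w"
proof (rule Mvw_eqI)
  show "is_module S E (component S R v \<union> component S R w)"
    by (simp add: modules is_module_component_Un[OF sym v])
  show "v \<in> component S R v \<union> component S R w" "w \<in> component S R v \<union> component S R w"
    using self_in_component[OF v] self_in_component[OF w(1)] by simp_all
  fix X assume "is_module S E X" "v \<in> X" "w \<in> X"
  then have X: "is_module S R X" "v \<in> X" "w \<in> X" using modules by blast+
  have vw: "v \<notin> component S R w" using in_component_commute[OF sym w(1)] w(2) by blast
  show "component S R v \<union> component S R w \<subseteq> X"
    using component_subset_module[OF sym X w(2)] component_subset_module[OF sym X(1,3,2) vw]
    by (rule Un_least)
qed

lemma layer_module_component:
  assumes sym: "symp_on S R" and modules: "\<And>X. is_module S E X \<longleftrightarrow> is_module S R X"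
    and v: "v \<in> S"
  shows "layer_module S E v (component S R v)"
  unfolding layer_module_def
proof (intro conjI ballI)
  show "v \<in> component S R v" using v by (rule self_in_component)
  show "is_module S E (component S R v)"
    using is_module_component_Un[OF sym v, of v] modules by simp
next
  fix w assume "w \<in> S - component S R v"
  then show "component S R v \<subseteq> Mvw S E v w"
    using Mvw_components[OF sym modules v] by simp
next
  fix w w' assume w: "w \<in> S - component S R v" and w': "w' \<in> S - component S R v"
  have "w' \<in> component S R w \<longleftrightarrow> w \<in> component S R w'"
    using in_component_commute[OF sym] w w' by blast
  then show "w' \<in> Mvw S E v w \<longleftrightarrow> w \<in> Mvw S E v w'"
    using w w' by (simp add: Mvw_components[OF sym modules v])
qed

lemma layer_module_max_proper_module:
  assumes sym: "symp_on S E"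
    and conn: "connected_graph S E" "connected_graph S (compl_rel E)"
    and T: "max_proper_module S E T" "v \<in> T"
  shows "layer_module S E v T"
proof -
  have TS: "T \<subseteq> S" using max_proper_moduleD(1)[OF T(1)] unfolding is_module_def by blast
  have Mvw_S: "Mvw S E v w = S" if w: "w \<in> S - T" for w
  proof (rule Mvw_eqI)
    show "is_module S E S" using w by (intro is_module_self) blast
    show "v \<in> S" "w \<in> S" using T(2) TS w by blast+
    fix X assume "is_module S E X" "v \<in> X" "w \<in> X"
    then show "S \<subseteq> X" using max_proper_module_absorbs[OF sym conn T] w by blast
  qed
  show ?thesis
    unfolding layer_module_def using T(2) max_proper_moduleD(1)[OF T(1)] TS by (simp add: Mvw_S)
qed

lemma Dfun_layer_module:
  assumes fin: "finite S" and v: "v \<in> S" and sym: "symp_on S E"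
  shows "layer_module S E v (Dfun S E v) \<and> (card S \<noteq> 1 \<longrightarrow> Dfun S E v \<noteq> S)"
proof (cases "card S = 1")
  case True
  then have S: "S = {v}" using v by (metis card_1_singletonE singletonD)
  have "layer_module S E v S"
    unfolding layer_module_def using v is_module_self[of S E] by blast
  then show ?thesis using True S unfolding Dfun_def by simp
next
  case False
  consider (disconnected) "\<not> connected_graph S E"
    | (co_disconnected) "connected_graph S E" "\<not> connected_graph S (compl_rel E)"
    | (prime) "connected_graph S E" "connected_graph S (compl_rel E)"
    by blast
  then show ?thesis
  proof cases
    case disconnected
    then show ?thesis
      using False layer_module_component[OF sym _ v] component_neq_if_not_connected[OF sym v]
      unfolding Dfun_def by simp
  next
    case co_disconnected
    then show ?thesis
      using False layer_module_component[OF symp_on_compl_rel[OF sym] _ v]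
        component_neq_if_not_connected[OF symp_on_compl_rel[OF sym] v]
      unfolding Dfun_def by simp
  next
    case prime
    let ?T = "THE M. max_proper_module S E M \<and> v \<in> M"
    have T: "max_proper_module S E ?T" "v \<in> ?T"
      using theI'[OF ex1_max_proper_module[OF fin v False sym prime]] by blast+
    then show ?thesis
      using False prime layer_module_max_proper_module[OF sym prime T] max_proper_moduleD(2)[OF T(1)]
      unfolding Dfun_def by simp
  qed
qed

lemma pv_classv_eq_card_rank:
  fixes r :: "'a \<Rightarrow> nat"
  assumes rank: "\<And>a b. a \<in> V \<Longrightarrow> b \<in> V \<Longrightarrow> precv V E v a b \<longleftrightarrow> r a < r b"
    and w: "w \<in> V"
  shows "pv V E v (classv V E v w) = card (r ` V \<inter> {..<r w})"
proof -
  define level where "level k = {x \<in> V. r x = k}" for k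
  have "simv V E v x u \<longleftrightarrow> r x = r u" if "x \<in> V" "u \<in> V" for x u
    using that unfolding simv_def by (auto simp: rank)
  then have classv: "classv V E v u = level (r u)" if "u \<in> V" for u
    using that unfolding classv_def level_def by blast
  then have "classesv V E v = level ` r ` V"
    unfolding classesv_def image_image by simp
  moreover have "class_precv V E v (level k) (level (r w)) \<longleftrightarrow> k < r w" if "k \<in> r ` V" for k
    using that w unfolding class_precv_def level_def by (auto simp: rank)
  ultimately have "{C \<in> classesv V E v. class_precv V E v C (classv V E v w)}
      = level ` (r ` V \<inter> {..<r w})"
    using classv[OF w] by auto
  moreover have "inj_on level (r ` V \<inter> {..<r w})"
    by (rule inj_onI) (auto simp: level_def)
  ultimately show ?thesis
    unfolding pv_def by (simp add: card_image)
qed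

text \<open>The index i with \<open>u \<in> D(i) - D(i+1)\<close>; for v, which lies in every \<open>D(i)\<close>, it is card V.\<close>
definition Dlevel :: "'a set \<Rightarrow> ('a \<Rightarrow> 'a \<Rightarrow> bool) \<Rightarrow> 'a \<Rightarrow> 'a \<Rightarrow> nat" where
  "Dlevel V E v u = card {j. j < card V \<and> u \<in> Dseq V E v (Suc j)}"

lemma Dlevel_le: "Dlevel V E v u \<le> card V"
proof -
  have "{j. j < card V \<and> u \<in> Dseq V E v (Suc j)} \<subseteq> {..<card V}" by auto
  then show ?thesis unfolding Dlevel_def using card_mono[OF finite_lessThan] by fastforce
qed

declare Dseq.simps(2) [simp del]

context
  fixes V :: "'a set" and E :: "'a \<Rightarrow> 'a \<Rightarrow> bool" and v :: 'a
  assumes fin: "finite V" and v: "v \<in> V" and sym: "symp_on V E"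
begin

lemma Dseq_module: "v \<in> Dseq V E v i \<and> is_module V E (Dseq V E v i)"
proof (induction i)
  case 0
  show ?case using v is_module_self[of V E] by auto
next
  case (Suc i)
  let ?S = "Dseq V E v i"
  have S: "?S \<subseteq> V" using Suc unfolding is_module_def by blast
  then have "layer_module ?S E v (Dfun ?S E v)"
    using Dfun_layer_module[of ?S v E] Suc finite_subset[OF S fin] symp_on_subset[OF sym S] by blast
  then show ?case
    using Suc is_module_trans unfolding layer_module_def Dseq.simps(2) by auto
qed

lemma Dseq_subset: "Dseq V E v i \<subseteq> V"
  using Dseq_module unfolding is_module_def by blast

lemma Dseq_Suc_layer_module:
  "layer_module (Dseq V E v i) E v (Dseq V E v (Suc i))
     \<and> (card (Dseq V E v i) \<noteq> 1 \<longrightarrow> Dseq V E v (Suc i) \<noteq> Dseq V E v i)"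
  unfolding Dseq.simps(2) using Dseq_module
  by (intro Dfun_layer_module[OF finite_subset[OF Dseq_subset fin] _ symp_on_subset[OF sym Dseq_subset]])
    simp

lemma Dseq_Suc_subset: "Dseq V E v (Suc i) \<subseteq> Dseq V E v i"
  using Dseq_Suc_layer_module unfolding layer_module_def is_module_def by blast

lemma Dseq_antimono: "i \<le> j \<Longrightarrow> Dseq V E v j \<subseteq> Dseq V E v i"
  using lift_Suc_antimono_le[of "Dseq V E v", OF Dseq_Suc_subset] by blast

lemma Dseq_Suc_psubset: "card (Dseq V E v i) \<noteq> 1 \<Longrightarrow> Dseq V E v (Suc i) \<subset> Dseq V E v i"
  using Dseq_Suc_layer_module Dseq_Suc_subset by blast

text \<open>Each step removes a vertex until only v is left.\<close>
lemma Dseq_card_V: "Dseq V E v (card V) = {v}"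
proof -
  have card_singleton: "Dseq V E v k = {v}" if "card (Dseq V E v k) = 1" for k
    using that Dseq_module by (metis card_1_singletonE singletonD)
  have bound: "card (Dseq V E v k) + k \<le> card V \<or> Dseq V E v k = {v}" for k
  proof (induction k)
    case (Suc k)
    show ?case
    proof (cases "Dseq V E v k = {v}")
      case True
      then show ?thesis using Dseq_Suc_subset[of k] Dseq_module[of "Suc k"] by blast
    next
      case False
      then have "card (Dseq V E v (Suc k)) < card (Dseq V E v k)"
        using card_singleton Dseq_Suc_psubset finite_subset[OF Dseq_subset fin]
        by (blast intro: psubset_card_mono)
      then show ?thesis using Suc.IH False by simp
    qed
  qed simp
  have "card (Dseq V E v (card V)) \<noteq> 0"
    using finite_subset[OF Dseq_subset fin] Dseq_module by auto
  with bound[of "card V"] show ?thesis by auto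
qed

lemma Dseq_Mvw_bounds:
  assumes "w \<in> Dseq V E v i - Dseq V E v (Suc i)"
  shows "Dseq V E v (Suc i) \<subseteq> Mvw V E v w" "Mvw V E v w \<subseteq> Dseq V E v i"
proof -
  have "Mvw V E v w = Mvw (Dseq V E v i) E v w"
    using Dseq_module assms by (intro Mvw_restrict) auto
  then show "Dseq V E v (Suc i) \<subseteq> Mvw V E v w"
    using Dseq_Suc_layer_module assms unfolding layer_module_def by auto
  show "Mvw V E v w \<subseteq> Dseq V E v i"
    using Dseq_module assms by (intro Mvw_least) auto
qed

lemma Dseq_Mvw_commute:
  assumes "w \<in> Dseq V E v i - Dseq V E v (Suc i)" "w' \<in> Dseq V E v i - Dseq V E v (Suc i)"
  shows "w' \<in> Mvw V E v w \<longleftrightarrow> w \<in> Mvw V E v w'"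
proof -
  have "Mvw V E v u = Mvw (Dseq V E v i) E v u" if "u \<in> Dseq V E v i" for u
    using Dseq_module that by (intro Mvw_restrict) auto
  then show ?thesis
    using Dseq_Suc_layer_module assms unfolding layer_module_def by auto
qed

lemma Dlevel_eq:
  assumes "i < card V" "u \<in> Dseq V E v i - Dseq V E v (Suc i)"
  shows "Dlevel V E v u = i"
proof -
  have "j < card V \<and> u \<in> Dseq V E v (Suc j) \<longleftrightarrow> j < i" for j
  proof
    assume j: "j < card V \<and> u \<in> Dseq V E v (Suc j)"
    show "j < i"
    proof (rule ccontr)
      assume "\<not> j < i"
      then have "Dseq V E v (Suc j) \<subseteq> Dseq V E v (Suc i)"
        by (intro Dseq_antimono) simp
      then show False using j assms(2) by blast
    qed
  next
    assume "j < i"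
    moreover have "Dseq V E v i \<subseteq> Dseq V E v (Suc j)"
      using \<open>j < i\<close> by (intro Dseq_antimono) simp
    ultimately show "j < card V \<and> u \<in> Dseq V E v (Suc j)"
      using assms by auto
  qed
  then show ?thesis unfolding Dlevel_def by (simp add: lessThan_def)
qed

lemma Dlevel_self: "Dlevel V E v v = card V"
proof -
  have "{j. j < card V \<and> v \<in> Dseq V E v (Suc j)} = {..<card V}"
    using Dseq_module by auto
  then show ?thesis unfolding Dlevel_def by simp
qed

lemma Dlevel_less:
  assumes "u \<in> V" "u \<noteq> v"
  shows "Dlevel V E v u < card V"
    and "u \<in> Dseq V E v (Dlevel V E v u) - Dseq V E v (Suc (Dlevel V E v u))"
proof -
  have "u \<notin> Dseq V E v (card V)" using assms(2) Dseq_card_V by simp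
  moreover have "u \<in> Dseq V E v 0" using assms(1) by simp
  ultimately obtain i where "i < card V" "u \<in> Dseq V E v i - Dseq V E v (Suc i)"
    using ex_least_nat_less[of "\<lambda>k. u \<notin> Dseq V E v k"] by blast
  then show "Dlevel V E v u < card V"
    and "u \<in> Dseq V E v (Dlevel V E v u) - Dseq V E v (Suc (Dlevel V E v u))"
    using Dlevel_eq by simp_all
qed

lemma Mvw_subset_Dseq_Dlevel:
  assumes "u \<in> V"
  shows "Mvw V E v u \<subseteq> Dseq V E v (Dlevel V E v u)"
proof (cases "u = v")
  case True
  then show ?thesis using Mvw_self[OF v] Dseq_module by simp
next
  case False
  then show ?thesis using Dseq_Mvw_bounds(2)[OF Dlevel_less(2)[OF assms]] by simp
qed

lemma Mvw_psubset_if_Dlevel_less: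
  assumes "a \<in> V" "b \<in> V" "Dlevel V E v a < Dlevel V E v b"
  shows "Mvw V E v b \<subset> Mvw V E v a"
proof -
  let ?i = "Dlevel V E v a"
  have "a \<noteq> v" using assms(3) Dlevel_le[of V E v b] Dlevel_self by auto
  then have a: "a \<in> Dseq V E v ?i - Dseq V E v (Suc ?i)" using Dlevel_less assms(1) by blast
  have "Mvw V E v b \<subseteq> Dseq V E v (Dlevel V E v b)"
    using assms(2) by (rule Mvw_subset_Dseq_Dlevel)
  also have "\<dots> \<subseteq> Dseq V E v (Suc ?i)"
    using assms(3) by (intro Dseq_antimono) simp
  also have "\<dots> \<subset> Mvw V E v a"
    using Dseq_Mvw_bounds(1)[OF a] in_Mvw[of a V E v] a by blast
  finally show ?thesis .
qed

lemma not_Mvw_psubset_if_Dlevel_eq: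
  assumes "a \<in> V" "b \<in> V" "Dlevel V E v a = Dlevel V E v b"
  shows "\<not> Mvw V E v b \<subset> Mvw V E v a"
proof (cases "a = v \<or> b = v")
  case True
  then have "a = b"
    using assms Dlevel_self Dlevel_less(1) by (metis less_irrefl)
  then show ?thesis by blast
next
  case False
  let ?i = "Dlevel V E v a"
  have a: "a \<in> Dseq V E v ?i - Dseq V E v (Suc ?i)"
    and b: "b \<in> Dseq V E v ?i - Dseq V E v (Suc ?i)"
    using Dlevel_less(2)[OF assms(1)] Dlevel_less(2)[OF assms(2)] assms(3) False
    by auto
  show ?thesis
  proof
    assume psub: "Mvw V E v b \<subset> Mvw V E v a"
    then have "b \<in> Mvw V E v a" using in_Mvw[of b V E v] by blast
    then have "a \<in> Mvw V E v b" using Dseq_Mvw_commute[OF a b] by simp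
    then have "Mvw V E v a \<subseteq> Mvw V E v b" by (rule Mvw_mono)
    with psub show False by blast
  qed
qed

lemma precv_iff_Dlevel_less:
  assumes "a \<in> V" "b \<in> V"
  shows "precv V E v a b \<longleftrightarrow> Dlevel V E v a < Dlevel V E v b"
  unfolding precv_def
proof (cases rule: linorder_cases[of "Dlevel V E v a" "Dlevel V E v b"])
  case less
  then show "Mvw V E v b \<subset> Mvw V E v a \<longleftrightarrow> Dlevel V E v a < Dlevel V E v b"
    using Mvw_psubset_if_Dlevel_less[OF assms] by simp
next
  case equal
  then show "Mvw V E v b \<subset> Mvw V E v a \<longleftrightarrow> Dlevel V E v a < Dlevel V E v b"
    using not_Mvw_psubset_if_Dlevel_eq[OF assms] by simp
next
  case greater
  then show "Mvw V E v b \<subset> Mvw V E v a \<longleftrightarrow> Dlevel V E v a < Dlevel V E v b"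
    using Mvw_psubset_if_Dlevel_less[OF assms(2,1)] by auto
qed

lemma Dseq_level_nonempty:
  assumes w: "w \<in> Dseq V E v i - Dseq V E v (Suc i)" and "j < i"
  shows "\<exists>u. u \<in> Dseq V E v j - Dseq V E v (Suc j)"
proof -
  have "w \<in> Dseq V E v j" using w \<open>j < i\<close> Dseq_antimono[of j i] by auto
  moreover have "v \<in> Dseq V E v j" "w \<noteq> v" using Dseq_module w by auto
  ultimately have "card (Dseq V E v j) \<noteq> 1" by (metis card_1_singletonE singletonD)
  then show ?thesis using Dseq_Suc_psubset by blast
qed

end

theorem lemma3p14:
  fixes V :: "'a set" and E :: "'a \<Rightarrow> 'a \<Rightarrow> bool"
  assumes "finite V" and "V \<noteq> {}"
    and "\<forall>x\<in>V. \<forall>y\<in>V. E x y \<longleftrightarrow> E y x"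
    and "\<forall>x\<in>V. \<not> E x x"
  shows "\<forall>i<card V. \<forall>v\<in>V. \<forall>w\<in>Dseq V E v i - Dseq V E v (Suc i).
           pv V E v (classv V E v w) = i"
proof (intro allI impI ballI)
  fix i v w
  assume i: "i < card V" and v: "v \<in> V" and w: "w \<in> Dseq V E v i - Dseq V E v (Suc i)"
  have sym: "symp_on V E" using assms(3) unfolding symp_on_def by blast
  have "{..<i} \<subseteq> Dlevel V E v ` V"
  proof
    fix j assume "j \<in> {..<i}"
    then obtain u where u: "u \<in> Dseq V E v j - Dseq V E v (Suc j)"
      using Dseq_level_nonempty[OF assms(1) v sym w] by blast
    then have "Dlevel V E v u = j" using Dlevel_eq[OF assms(1) v sym] \<open>j \<in> {..<i}\<close> i by simp
    then show "j \<in> Dlevel V E v ` V" using u Dseq_subset[OF assms(1) v sym] by blast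
  qed
  then have "Dlevel V E v ` V \<inter> {..<i} = {..<i}" by blast
  moreover have "Dlevel V E v w = i" using Dlevel_eq[OF assms(1) v sym i w] .
  moreover have "w \<in> V" using w Dseq_subset[OF assms(1) v sym] by blast
  ultimately show "pv V E v (classv V E v w) = i"
    using pv_classv_eq_card_rank[OF precv_iff_Dlevel_less[OF assms(1) v sym]] by simp
qed

end
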